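(* Under the channel-resolvability polar coding scheme described in the context, for every block $i\in\{1,\dots,k\}$, $$\mathbb{D}\big(q_{X^{1:N}Y^{1:N}}\,\big\|\,\widetilde{p}_{X_i^{1:N}Y_i^{1:N}}\big)\le N\delta_N .$$
   Context: All logarithms are base 2 and entropies are in bits; $\mathbb{D}(\cdot\|\cdot)$ is the Kullback–Leibler divergence, with $\mathbb{D}(p\|q)=+\infty$ if $p(x)>0=q(x)$ for some $x$. For a vector $a^{1:N}$ and $\mathcal{A}\subseteq\{1,\dots,N\}$, $a^{1:N}[\mathcal{A}]$ denotes the subvector of components with indices in $\mathcal{A}$. Setting (channel resolvability scheme): Let $\mathcal{X},\mathcal{Y}$ be finite alphabets with $|\mathcal{X}|$ a prime number, identified with the field $\mathbb{F}_{|\mathcal{X}|}$. Let $q_{XY}=q_Xq_{Y|X}$ be a joint distribution, where $q_{Y|X}$ is a discrete memoryless channel. Let $N=2^n$, $n\ge1$, and $G_n=\begin{bmatrix}1&0\\1&1\end{bmatrix}^{\otimes n}$ (Kronecker power, arithmetic over $\mathbb{F}_{|\mathcal{X}|}$). Let $(X^{1:N},Y^{1:N})$ be i.i.d. with law $q_{XY}$ (joint law $q_{X^{1:N}Y^{1:N}}=\prod q_{XY}$) and $U^{1:N}=X^{1:N}G_n$, with induced distributions denoted $q$. Fix $\beta\in(0,1/2)$, $\delta_N=2^{-N^\beta}$, and $\mathcal{V}_X=\{j: H(U^j|U^{1:j-1})>\log|\mathcal{X}|-\delta_N\}$, $\mathcal{V}_{X|Y}=\{j: H(U^j|U^{1:j-1}Y^{1:N})>\log|\mathcal{X}|-\delta_N\}$.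 Encoding over $k$ blocks: let $\bar C_1$ be uniform on $\mathcal{X}^{|\mathcal{V}_{X|Y}|}$ and $C_1,\dots,C_k$ uniform on $\mathcal{X}^{|\mathcal{V}_X\setminus\mathcal{V}_{X|Y}|}$, all mutually independent. In block $i$, set $\widetilde U_i^{1:N}[\mathcal{V}_{X|Y}]=\bar C_1$ (the same vector in every block), $\widetilde U_i^{1:N}[\mathcal{V}_X\setminus\mathcal{V}_{X|Y}]=C_i$, and for $j\notin\mathcal{V}_X$, in increasing order of $j$, draw $\widetilde U_i^j$ (with fresh independent randomness) according to $q_{U^j|U^{1:j-1}}(\cdot\,|\,\widetilde U_i^{1:j-1})$. Set $\widetilde X_i^{1:N}=\widetilde U_i^{1:N}G_n$ and send it through the memoryless channel $q_{Y^{1:N}|X^{1:N}}=\prod q_{Y|X}$ (independently across blocks), producing output $\widetilde Y_i^{1:N}$. $\widetilde p$ denotes the distributions induced by this scheme, e.g. $\widetilde p_{X_i^{1:N}Y_i^{1:N}}=q_{Y^{1:N}|X^{1:N}}\widetilde p_{X_i^{1:N}}$. *)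

theory Defs
  imports "HOL-Probability.Probability"
begin

(* Vectors a^{1:N} are lists of length N, 0-indexed (index j here = index j+1 in the paper).
   The alphabet X is {0..<p} = F_p.  Entropies/divergence in bits. *)

fun iid_pmf :: "nat \<Rightarrow> 'a pmf \<Rightarrow> 'a list pmf" where
  "iid_pmf 0 M = return_pmf []"
| "iid_pmf (Suc m) M = bind_pmf M (\<lambda>x. map_pmf (\<lambda>xs. x # xs) (iid_pmf m M))"

fun mem_channel :: "('x \<Rightarrow> 'y pmf) \<Rightarrow> 'x list \<Rightarrow> 'y list pmf" where
  "mem_channel W [] = return_pmf []"
| "mem_channel W (x # xs) = bind_pmf (W x) (\<lambda>y. map_pmf (\<lambda>ys. y # ys) (mem_channel W xs))"

text \<open>the kernel [[1,0],[1,1]] (rows a, columns b in {0,1}) and its inverse [[1,0],[-1,1]] over F_p\<close>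
definition kernel_G :: "nat \<Rightarrow> nat \<Rightarrow> nat" where
  "kernel_G a b = (if b \<le> a then 1 else 0)"

definition kernel_G_inv :: "nat \<Rightarrow> nat \<Rightarrow> nat \<Rightarrow> nat" where
  "kernel_G_inv p a b = (if a = b then 1 else if b < a then p - 1 else 0)"

text \<open>Kronecker power: K^{\<otimes>(m+1)} = K \<otimes> K^{\<otimes> m}\<close>
fun kron_pow :: "(nat \<Rightarrow> nat \<Rightarrow> nat) \<Rightarrow> nat \<Rightarrow> nat \<Rightarrow> nat \<Rightarrow> nat" where
  "kron_pow K 0 a b = 1"
| "kron_pow K (Suc m) a b =
     K (a div 2^m) (b div 2^m) * kron_pow K m (a mod 2^m) (b mod 2^m)"

definition vec_mat :: "nat \<Rightarrow> nat \<Rightarrow> (nat \<Rightarrow> nat \<Rightarrow> nat) \<Rightarrow> nat list \<Rightarrow> nat list" where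
  "vec_mat p N M xs = map (\<lambda>j. (\<Sum>i<N. xs ! i * M i j) mod p) [0..<N]"

definition polar_G :: "nat \<Rightarrow> nat \<Rightarrow> nat list \<Rightarrow> nat list" where
  "polar_G p n xs = vec_mat p (2^n) (kron_pow kernel_G n) xs"

definition polar_G_inv :: "nat \<Rightarrow> nat \<Rightarrow> nat list \<Rightarrow> nat list" where
  "polar_G_inv p n us = vec_mat p (2^n) (kron_pow (kernel_G_inv p) n) us"

definition cond_entropy :: "('a \<times> 'b) pmf \<Rightarrow> real" where
  "cond_entropy M =
     - (\<Sum>z\<in>set_pmf M. pmf M z * log 2 (pmf M z / pmf (map_pmf snd M) (snd z)))"

definition KL_div :: "'a pmf \<Rightarrow> 'a pmf \<Rightarrow> ereal" where
  "KL_div P Q =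
     (if \<exists>x. pmf P x > 0 \<and> pmf Q x = 0 then \<infinity>
      else ereal (\<Sum>x\<in>set_pmf P. pmf P x * log 2 (pmf P x / pmf Q x)))"

definition q_XY :: "nat pmf \<Rightarrow> (nat \<Rightarrow> 'y pmf) \<Rightarrow> (nat \<times> 'y) pmf" where
  "q_XY qX W = bind_pmf qX (\<lambda>x. map_pmf (\<lambda>y. (x, y)) (W x))"

definition q_joint :: "nat \<Rightarrow> nat pmf \<Rightarrow> (nat \<Rightarrow> 'y pmf) \<Rightarrow> (nat list \<times> 'y list) pmf" where
  "q_joint N qX W = map_pmf (\<lambda>zs. (map fst zs, map snd zs)) (iid_pmf N (q_XY qX W))"

definition q_UY :: "nat \<Rightarrow> nat \<Rightarrow> nat pmf \<Rightarrow> (nat \<Rightarrow> 'y pmf) \<Rightarrow> (nat list \<times> 'y list) pmf" where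
  "q_UY p n qX W = map_pmf (\<lambda>(xs, ys). (polar_G p n xs, ys)) (q_joint (2^n) qX W)"

definition q_U :: "nat \<Rightarrow> nat \<Rightarrow> nat pmf \<Rightarrow> (nat \<Rightarrow> 'y pmf) \<Rightarrow> nat list pmf" where
  "q_U p n qX W = map_pmf fst (q_UY p n qX W)"

definition H_U :: "nat \<Rightarrow> nat \<Rightarrow> nat pmf \<Rightarrow> (nat \<Rightarrow> 'y pmf) \<Rightarrow> nat \<Rightarrow> real" where
  "H_U p n qX W j = cond_entropy (map_pmf (\<lambda>(us, ys). (us ! j, take j us)) (q_UY p n qX W))"

definition H_UY :: "nat \<Rightarrow> nat \<Rightarrow> nat pmf \<Rightarrow> (nat \<Rightarrow> 'y pmf) \<Rightarrow> nat \<Rightarrow> real" where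
  "H_UY p n qX W j = cond_entropy (map_pmf (\<lambda>(us, ys). (us ! j, (take j us, ys))) (q_UY p n qX W))"

definition delta :: "nat \<Rightarrow> real \<Rightarrow> real" where
  "delta N \<beta> = 2 powr (- (real N powr \<beta>))"

definition V_X :: "nat \<Rightarrow> nat \<Rightarrow> real \<Rightarrow> nat pmf \<Rightarrow> (nat \<Rightarrow> 'y pmf) \<Rightarrow> nat set" where
  "V_X p n \<beta> qX W = {j. j < 2^n \<and> H_U p n qX W j > log 2 p - delta (2^n) \<beta>}"

definition V_XY :: "nat \<Rightarrow> nat \<Rightarrow> real \<Rightarrow> nat pmf \<Rightarrow> (nat \<Rightarrow> 'y pmf) \<Rightarrow> nat set" where
  "V_XY p n \<beta> qX W = {j. j < 2^n \<and> H_UY p n qX W j > log 2 p - delta (2^n) \<beta>}"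

text \<open>q_{U^j|U^{1:j-1}}(. | us); on prefixes of q-probability zero (where the conditional
  is undefined) an arbitrary fixed law is used -- irrelevant for D(q || p~)\<close>
definition cond_next :: "nat \<Rightarrow> nat \<Rightarrow> nat pmf \<Rightarrow> (nat \<Rightarrow> 'y pmf) \<Rightarrow> nat \<Rightarrow> nat list \<Rightarrow> nat pmf" where
  "cond_next p n qX W j us =
     (if set_pmf (q_U p n qX W) \<inter> {us'. take j us' = us} \<noteq> {}
      then map_pmf (\<lambda>us'. us' ! j) (cond_pmf (q_U p n qX W) {us'. take j us' = us})
      else return_pmf 0)"

fun enc_prefix :: "(nat \<Rightarrow> nat list \<Rightarrow> nat pmf) \<Rightarrow> nat set \<Rightarrow> (nat \<Rightarrow> nat) \<Rightarrow> nat \<Rightarrow> nat list pmf" where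
  "enc_prefix cnd V f 0 = return_pmf []"
| "enc_prefix cnd V f (Suc j) =
     bind_pmf (enc_prefix cnd V f j)
       (\<lambda>us. if j \<in> V then return_pmf (us @ [f j]) else map_pmf (\<lambda>u. us @ [u]) (cnd j us))"

text \<open>one block given C1bar and C_i: output (X~_i, Y~_i), with X~ = U~ G_n^{-1}\<close>
definition scheme_block :: "nat \<Rightarrow> nat \<Rightarrow> real \<Rightarrow> nat pmf \<Rightarrow> (nat \<Rightarrow> 'y pmf) \<Rightarrow>
    (nat \<Rightarrow> nat) \<Rightarrow> (nat \<Rightarrow> nat) \<Rightarrow> (nat list \<times> 'y list) pmf" where
  "scheme_block p n \<beta> qX W cbar c =
     bind_pmf
       (enc_prefix (cond_next p n qX W) (V_X p n \<beta> qX W)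
          (\<lambda>j. if j \<in> V_XY p n \<beta> qX W then cbar j else c j) (2^n))
       (\<lambda>us. map_pmf (\<lambda>ys. (polar_G_inv p n us, ys)) (mem_channel W (polar_G_inv p n us)))"

definition scheme :: "nat \<Rightarrow> nat \<Rightarrow> real \<Rightarrow> nat pmf \<Rightarrow> (nat \<Rightarrow> 'y pmf) \<Rightarrow> nat \<Rightarrow>
    (nat list \<times> 'y list) list pmf" where
  "scheme p n \<beta> qX W k =
     bind_pmf (pmf_of_set (PiE (V_XY p n \<beta> qX W) (\<lambda>_. {..<p})))
       (\<lambda>cbar. iid_pmf k
          (bind_pmf (pmf_of_set (PiE (V_X p n \<beta> qX W - V_XY p n \<beta> qX W) (\<lambda>_. {..<p})))
             (\<lambda>c. scheme_block p n \<beta> qX W cbar c)))"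

end

theory Submission
  imports Defs
begin

(* The law q of U = X G_n factors by the chain rule into the conditionals q(u_j | u_<j).  In every
   block the encoder draws each position outside V_X from exactly that conditional and each position
   in V_X uniformly (the shared C-bar is still uniform within one block), so
   p~(u) >= p^(-|V_X|) * prod_{j not in V_X} q(u_j | u_<j).  Taking logarithms and q-expectations gives
   D(q_U || p~_U) <= sum_{j in V_X} (log p - H(U_j | U_<j)) <= |V_X| delta_N <= N delta_N.
   As G_n is invertible over F_p and both laws are fed through the same channel, the divergence of
   the pairs (X, Y) is that of X = U G_n^(-1), which is at most that of U. *)

section \<open>Divergence of finitely supported laws\<close>

definition KL_real :: "'a pmf \<Rightarrow> 'a pmf \<Rightarrow> real" where
  "KL_real P Q = (\<Sum>x\<in>set_pmf P. pmf P x * log 2 (pmf P x / pmf Q x))"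

lemma KL_div_eq_KL_real:
  assumes "\<And>x. x \<in> set_pmf P \<Longrightarrow> pmf Q x > 0"
  shows "KL_div P Q = ereal (KL_real P Q)"
proof -
  have "\<not> (\<exists>x. pmf P x > 0 \<and> pmf Q x = 0)"
    using assms by (metis less_irrefl set_pmf_iff pmf_positive)
  then show ?thesis unfolding KL_div_def KL_real_def by simp
qed

lemma sum_log_ratio_antimono:
  assumes "\<And>x. x \<in> S \<Longrightarrow> 0 < a x \<and> 0 < g x \<and> g x \<le> h x"
  shows "(\<Sum>x\<in>S. a x * log 2 (a x / h x)) \<le> (\<Sum>x\<in>S. a x * log 2 (a x / g x))"
proof (rule sum_mono)
  fix x assume "x \<in> S"
  with assms have "0 < a x" "0 < g x" "g x \<le> h x" by auto
  then show "a x * log 2 (a x / h x) \<le> a x * log 2 (a x / g x)"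
    by (intro mult_left_mono log_mono divide_left_mono) auto
qed

lemma pmf_le_pmf_map: "pmf M x \<le> pmf (map_pmf f M) (f x)"
proof -
  have "measure M {x} \<le> measure M (f -` {f x})"
    by (rule measure_pmf.finite_measure_mono) auto
  then show ?thesis by (simp add: pmf_map measure_pmf_single)
qed

lemma KL_real_map_inj_le:
  assumes inj: "inj_on f (set_pmf A)" and pos: "\<And>a. a \<in> set_pmf A \<Longrightarrow> pmf B a > 0"
  shows "KL_real (map_pmf f A) (map_pmf f B) \<le> KL_real A B"
proof -
  have "KL_real (map_pmf f A) (map_pmf f B)
      = (\<Sum>a\<in>set_pmf A. pmf A a * log 2 (pmf A a / pmf (map_pmf f B) (f a)))"
    unfolding KL_real_def set_map_pmf sum.reindex[OF inj] by (simp add: pmf_map_inj[OF inj])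
  also have "\<dots> \<le> KL_real A B"
    unfolding KL_real_def using pos pmf_le_pmf_map[of B]
    by (intro sum_log_ratio_antimono) (auto simp: pmf_positive)
  finally show ?thesis .
qed

definition joint_pmf :: "'a pmf \<Rightarrow> ('a \<Rightarrow> 'b pmf) \<Rightarrow> ('a \<times> 'b) pmf" where
  "joint_pmf A K = bind_pmf A (\<lambda>x. map_pmf (Pair x) (K x))"

lemma pmf_bind_eq_single:
  assumes "\<And>y. y \<noteq> w \<Longrightarrow> pmf (g y) z = 0"
  shows "pmf (bind_pmf A g) z = pmf A w * pmf (g w) z"
proof -
  have "(\<lambda>y. pmf (g y) z) = (\<lambda>y. indicator {w} y * pmf (g w) z)"
    using assms by (auto simp: indicator_def)
  then show ?thesis by (simp add: pmf_bind measure_pmf_single)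
qed

lemma pmf_joint_pmf: "pmf (joint_pmf A K) (x, y) = pmf A x * pmf (K x) y"
proof -
  have "inj (Pair x)" by (rule injI) simp
  then show ?thesis unfolding joint_pmf_def
    by (subst pmf_bind_eq_single[where w = x])
      (auto simp: pmf_map_inj'[OF \<open>inj (Pair x)\<close>] pmf_eq_0_set_pmf)
qed

lemma set_pmf_joint_pmf: "set_pmf (joint_pmf A K) = Sigma (set_pmf A) (\<lambda>x. set_pmf (K x))"
  unfolding joint_pmf_def by auto

lemma map_fst_joint_pmf: "map_pmf fst (joint_pmf A K) = A"
  by (simp add: joint_pmf_def map_bind_pmf map_pmf_comp o_def map_pmf_const bind_return_pmf')

lemma KL_real_joint_pmf:
  assumes "finite (set_pmf A)" "\<And>x. finite (set_pmf (K x))"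
  shows "KL_real (joint_pmf A K) (joint_pmf B K) = KL_real A B"
proof -
  have "KL_real (joint_pmf A K) (joint_pmf B K)
      = (\<Sum>x\<in>set_pmf A. \<Sum>y\<in>set_pmf (K x). pmf (K x) y * (pmf A x * log 2 (pmf A x / pmf B x)))"
    unfolding KL_real_def set_pmf_joint_pmf using assms
    by (subst sum.Sigma) (auto intro!: sum.cong simp: pmf_joint_pmf set_pmf_iff)
  also have "\<dots> = KL_real A B"
    by (simp add: KL_real_def sum_distrib_right[symmetric] sum_pmf_eq_1 assms)
  finally show ?thesis .
qed

lemma KL_div_joint_pmf_map_inj_le:
  assumes inj: "inj_on f (set_pmf A)" and fin: "finite (set_pmf A)"
    and finK: "\<And>x. finite (set_pmf (K x))" and pos: "\<And>a. a \<in> set_pmf A \<Longrightarrow> pmf B a > 0"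
  shows "KL_div (joint_pmf (map_pmf f A) K) (joint_pmf (map_pmf f B) K) \<le> ereal (KL_real A B)"
proof -
  have "KL_div (joint_pmf (map_pmf f A) K) (joint_pmf (map_pmf f B) K)
      = ereal (KL_real (joint_pmf (map_pmf f A) K) (joint_pmf (map_pmf f B) K))"
  proof (rule KL_div_eq_KL_real)
    fix z assume "z \<in> set_pmf (joint_pmf (map_pmf f A) K)"
    then obtain a y where z: "z = (f a, y)" "a \<in> set_pmf A" "y \<in> set_pmf (K (f a))"
      by (auto simp: set_pmf_joint_pmf)
    have "0 < pmf B a" using pos z(2) .
    also have "\<dots> \<le> pmf (map_pmf f B) (f a)" by (rule pmf_le_pmf_map)
    finally show "pmf (joint_pmf (map_pmf f B) K) z > 0"
      using z(3) by (simp add: z(1) pmf_joint_pmf pmf_positive)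
  qed
  also have "\<dots> = ereal (KL_real (map_pmf f A) (map_pmf f B))"
    using fin finK by (simp add: KL_real_joint_pmf)
  also have "\<dots> \<le> ereal (KL_real A B)"
    using KL_real_map_inj_le[OF inj pos] by simp
  finally show ?thesis .
qed

section \<open>I.i.d. laws and the memoryless channel\<close>

lemma set_pmf_iid_pmf: "set_pmf (iid_pmf m M) \<subseteq> {xs. set xs \<subseteq> set_pmf M \<and> length xs = m}"
  by (induction m) fastforce+

lemma iid_pmf_nth: "j < k \<Longrightarrow> map_pmf (\<lambda>xs. xs ! j) (iid_pmf k M) = M"
proof (induction k arbitrary: j)
  case 0
  then show ?case by simp
next
  case (Suc k)
  then show ?case
    by (cases j) (simp_all add: map_bind_pmf map_pmf_comp bind_return_pmf' o_def map_pmf_const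
        bind_pmf_const)
qed

lemma finite_set_pmf_mem_channel: "finite (set_pmf (mem_channel (W :: _ \<Rightarrow> 'y::finite pmf) xs))"
proof -
  have "set_pmf (mem_channel W xs) \<subseteq> {ys. set ys \<subseteq> (UNIV :: 'y set) \<and> length ys = length xs}"
    by (induction xs) auto
  then show ?thesis by (rule finite_subset) (rule finite_lists_length_eq, simp)
qed

lemma q_joint_eq_joint_pmf: "q_joint N qX W = joint_pmf (iid_pmf N qX) (mem_channel W)"
proof (induction N)
  case 0
  then show ?case by (simp add: q_joint_def joint_pmf_def bind_return_pmf)
next
  case (Suc N)
  have "q_joint (Suc N) qX W = bind_pmf qX (\<lambda>x. bind_pmf (W x) (\<lambda>y.
          map_pmf (\<lambda>(xs, ys). (x # xs, y # ys)) (q_joint N qX W)))"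
    by (simp add: q_joint_def q_XY_def map_bind_pmf bind_map_pmf map_pmf_comp bind_assoc_pmf
          bind_return_pmf o_def split_def)
  also have "\<dots> = joint_pmf (iid_pmf (Suc N) qX) (mem_channel W)"
    unfolding Suc joint_pmf_def
    by (simp add: map_bind_pmf bind_map_pmf map_pmf_comp bind_assoc_pmf bind_return_pmf o_def
        split_def) (subst bind_commute_pmf, rule refl)
  finally show ?case .
qed

section \<open>Invertibility of the polar transform\<close>

lemma sum_lessThan_add: "sum f {..<a + b} = sum f {..<a} + (\<Sum>i<b. f (a + i))" for a b :: nat
  by (induction b) (auto simp: add.assoc)

lemma kernel_G_inverse:
  assumes "p \<ge> 2" "a < 2" "b < 2"
  shows "(kernel_G a 0 * kernel_G_inv p 0 b + kernel_G a 1 * kernel_G_inv p 1 b) mod p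
         = (if a = b then 1 else 0)"
proof -
  have "a = 0 \<or> a = 1" "b = 0 \<or> b = 1" using assms by auto
  then show ?thesis using assms(1) by (auto simp: kernel_G_def kernel_G_inv_def)
qed

lemma kron_pow_kernel_G_inverse:
  assumes p: "p \<ge> 2"
  shows "a < 2^m \<Longrightarrow> b < 2^m \<Longrightarrow>
    (\<Sum>j<2^m. kron_pow kernel_G m a j * kron_pow (kernel_G_inv p) m j b) mod p
      = (if a = b then 1 else 0)"
proof (induction m arbitrary: a b)
  case 0
  then show ?case using p by simp
next
  case (Suc m)
  define M :: nat where "M = 2^m"
  define a1 a2 b1 b2 where "a1 = a div M" "a2 = a mod M" "b1 = b div M" "b2 = b mod M"
  have ab: "a1 < 2" "b1 < 2" "a2 < M" "b2 < M" using Suc.prems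
    by (auto simp: a1_a2_b1_b2_def M_def less_mult_imp_div_less)
  let ?T = "\<lambda>j. kron_pow kernel_G m a2 j * kron_pow (kernel_G_inv p) m j b2"
  let ?k = "\<lambda>c. kernel_G a1 c * kernel_G_inv p c b1"
  define S where "S = (\<Sum>j<M. ?T j)"
  have S: "S mod p = (if a2 = b2 then 1 else 0)"
    using Suc.IH ab unfolding S_def M_def by blast
  have "(\<Sum>j<2^Suc m. kron_pow kernel_G (Suc m) a j * kron_pow (kernel_G_inv p) (Suc m) j b)
      = (\<Sum>j<M. ?k 0 * ?T j) + (\<Sum>j<M. ?k 1 * ?T j)"
    unfolding power_Suc mult_2 M_def[symmetric] sum_lessThan_add
    by (intro arg_cong2[where f = "(+)"] sum.cong) (auto simp: a1_a2_b1_b2_def M_def)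
  also have "\<dots> = (?k 0 + ?k 1) * S"
    by (simp only: S_def sum_distrib_left distrib_right sum.distrib)
  finally have "(\<Sum>j<2^Suc m. kron_pow kernel_G (Suc m) a j * kron_pow (kernel_G_inv p) (Suc m) j b)
      mod p = ((?k 0 + ?k 1) mod p) * (S mod p) mod p"
    by (simp only: mod_mult_eq)
  also have "\<dots> = (if a1 = b1 then 1 else 0) * (if a2 = b2 then 1 else 0) mod p"
    unfolding S kernel_G_inverse[OF p ab(1,2)] ..
  also have "\<dots> = (if a = b then 1 else 0)"
    using p by (auto simp: a1_a2_b1_b2_def) (metis div_mult_mod_eq)
  finally show ?case .
qed

lemma sum_mod_mult_mod: "(\<Sum>j\<in>J. (g j mod p) * h j) mod p = (\<Sum>j\<in>J. g j * h j) mod p"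
  for p :: nat
proof -
  have "(\<Sum>j\<in>J. (g j mod p) * h j) mod p = (\<Sum>j\<in>J. (g j mod p) * h j mod p) mod p"
    by (rule mod_sum_eq[symmetric])
  also have "\<dots> = (\<Sum>j\<in>J. g j * h j mod p) mod p"
    by (simp only: mod_mult_left_eq)
  finally show ?thesis by (simp only: mod_sum_eq)
qed

lemma length_polar_G [simp]: "length (polar_G p n xs) = 2^n"
  by (simp add: polar_G_def vec_mat_def)

lemma set_polar_G: "p > 0 \<Longrightarrow> set (polar_G p n xs) \<subseteq> {..<p}"
  by (auto simp: polar_G_def vec_mat_def)

lemma polar_G_inv_polar_G:
  assumes p: "p \<ge> 2" and len: "length xs = 2^n" and xs: "set xs \<subseteq> {..<p}"
  shows "polar_G_inv p n (polar_G p n xs) = xs"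
proof (rule nth_equalityI)
  show "length (polar_G_inv p n (polar_G p n xs)) = length xs"
    by (simp add: polar_G_inv_def vec_mat_def len)
next
  fix l assume "l < length (polar_G_inv p n (polar_G p n xs))"
  then have l: "l < 2^n" by (simp add: polar_G_inv_def vec_mat_def)
  let ?A = "kron_pow kernel_G n" and ?B = "kron_pow (kernel_G_inv p) n"
  have "polar_G_inv p n (polar_G p n xs) ! l
      = (\<Sum>j<2^n. ((\<Sum>i<2^n. xs ! i * ?A i j) mod p) * ?B j l) mod p"
    using l by (simp add: polar_G_inv_def polar_G_def vec_mat_def)
  also have "\<dots> = (\<Sum>j<2^n. \<Sum>i<2^n. xs ! i * (?A i j * ?B j l)) mod p"
    by (simp only: sum_mod_mult_mod sum_distrib_right mult.assoc)
  also have "\<dots> = (\<Sum>i<2^n. (\<Sum>j<2^n. ?A i j * ?B j l) * xs ! i) mod p"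
    by (subst sum.swap) (simp add: sum_distrib_left ac_simps)
  also have "\<dots> = (\<Sum>i<2^n. ((\<Sum>j<2^n. ?A i j * ?B j l) mod p) * xs ! i) mod p"
    by (simp only: sum_mod_mult_mod)
  also have "\<dots> = (\<Sum>i<2^n. if i = l then xs ! i else 0) mod p"
    using l by (intro arg_cong[where f = "\<lambda>x. x mod p"] sum.cong)
      (simp_all add: kron_pow_kernel_G_inverse[OF p])
  also have "\<dots> = xs ! l mod p"
    using l by simp
  also have "\<dots> = xs ! l"
  proof -
    have "xs ! l \<in> set xs" using l len by simp
    then show ?thesis using xs by auto
  qed
  finally show "polar_G_inv p n (polar_G p n xs) ! l = xs ! l" .
qed

section \<open>The chain rule for laws of words\<close>

definition next_symbol_law :: "nat list pmf \<Rightarrow> nat \<Rightarrow> nat list \<Rightarrow> nat pmf" where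
  "next_symbol_law Q j us =
     (if set_pmf Q \<inter> {us'. take j us' = us} \<noteq> {}
      then map_pmf (\<lambda>us'. us' ! j) (cond_pmf Q {us'. take j us' = us})
      else return_pmf 0)"

lemma cond_next_eq_next_symbol_law: "cond_next p n qX W = next_symbol_law (q_U p n qX W)"
  by (intro ext) (simp add: cond_next_def next_symbol_law_def)

lemma measure_pmf_finite_eq_sum:
  "finite (set_pmf Q) \<Longrightarrow> measure Q A = (\<Sum>x\<in>A \<inter> set_pmf Q. pmf Q x)"
  by (subst measure_Int_set_pmf[symmetric]) (simp add: measure_measure_pmf_finite)

lemma measure_cond_pmf_finite:
  assumes fin: "finite (set_pmf Q)" and ne: "set_pmf Q \<inter> S \<noteq> {}"
  shows "measure (cond_pmf Q S) A = measure Q (A \<inter> S) / measure Q S"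
proof -
  have "finite (set_pmf (cond_pmf Q S))" using fin ne by (simp add: set_cond_pmf)
  then have "measure (cond_pmf Q S) A = (\<Sum>x\<in>A \<inter> S \<inter> set_pmf Q. pmf (cond_pmf Q S) x)"
    using ne by (simp add: measure_pmf_finite_eq_sum set_cond_pmf Int_ac)
  also have "\<dots> = (\<Sum>x\<in>A \<inter> S \<inter> set_pmf Q. pmf Q x / measure Q S)"
    by (intro sum.cong) (auto simp: pmf_cond[OF ne])
  also have "\<dots> = measure Q (A \<inter> S) / measure Q S"
    by (simp add: measure_pmf_finite_eq_sum[OF fin] sum_divide_distrib)
  finally show ?thesis .
qed

lemma pmf_next_symbol_law:
  assumes fin: "finite (set_pmf Q)" and ne: "set_pmf Q \<inter> {us. take j us = t} \<noteq> {}"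
  shows "pmf (next_symbol_law Q j t) x
    = measure Q {us. take j us = t \<and> us ! j = x} / measure Q {us. take j us = t}"
proof -
  have "pmf (next_symbol_law Q j t) x
      = measure (cond_pmf Q {us. take j us = t}) ((\<lambda>us. us ! j) -` {x})"
    using ne by (simp add: next_symbol_law_def pmf_map)
  also have "\<dots> = measure Q ((\<lambda>us. us ! j) -` {x} \<inter> {us. take j us = t})
      / measure Q {us. take j us = t}"
    by (rule measure_cond_pmf_finite[OF fin ne])
  also have "(\<lambda>us. us ! j) -` {x} \<inter> {us. take j us = t} = {us. take j us = t \<and> us ! j = x}"
    by auto
  finally show ?thesis .
qed

lemma measure_pmf_eq_on_support:
  "A \<inter> set_pmf Q = B \<inter> set_pmf Q \<Longrightarrow> measure Q A = measure Q B"
  by (metis measure_Int_set_pmf)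

lemma take_Suc_eq_take_Suc_iff:
  "j < length xs \<Longrightarrow> j < length ys \<Longrightarrow>
    take (Suc j) xs = take (Suc j) ys \<longleftrightarrow> take j xs = take j ys \<and> xs ! j = ys ! j"
  by (simp add: take_Suc_conv_app_nth)

lemma pmf_chain_rule:
  assumes fin: "finite (set_pmf Q)" and u: "u \<in> set_pmf Q"
    and len: "\<And>us. us \<in> set_pmf Q \<Longrightarrow> length us = N"
  shows "pmf Q u = (\<Prod>j<N. pmf (next_symbol_law Q j (take j u)) (u ! j))"
proof -
  define m where "m j = measure Q {us. take j us = take j u}" for j
  have m_pos: "m j > 0" for j
    unfolding m_def by (rule measure_pmf_posI[OF u]) simp
  have "pmf (next_symbol_law Q j (take j u)) (u ! j) = m (Suc j) / m j" if j: "j < N" for j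
  proof -
    have take_Suc: "take (Suc j) us = take (Suc j) u \<longleftrightarrow> take j us = take j u \<and> us ! j = u ! j"
      if "us \<in> set_pmf Q" for us
      by (rule take_Suc_eq_take_Suc_iff) (use j len[OF that] len[OF u] in auto)
    have "{us. take j us = take j u \<and> us ! j = u ! j} \<inter> set_pmf Q
        = {us. take (Suc j) us = take (Suc j) u} \<inter> set_pmf Q"
      by (auto simp: take_Suc)
    then have "measure Q {us. take j us = take j u \<and> us ! j = u ! j} = m (Suc j)"
      unfolding m_def by (rule measure_pmf_eq_on_support)
    moreover have "set_pmf Q \<inter> {us. take j us = take j u} \<noteq> {}" using u by auto
    ultimately show ?thesis by (simp add: pmf_next_symbol_law[OF fin] m_def)
  qed
  then have "(\<Prod>j<N. pmf (next_symbol_law Q j (take j u)) (u ! j)) = (\<Prod>j<N. m (Suc j) / m j)"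
    by simp
  also have "\<dots> = m N / m 0"
    using m_pos by (intro prod_lessThan_telescope) (simp add: less_le)
  also have "m 0 = 1" by (simp add: m_def)
  also have "m N = pmf Q u"
  proof -
    have "{us. take N us = take N u} \<inter> set_pmf Q = {u} \<inter> set_pmf Q"
      using len u by auto
    then have "m N = measure Q {u}"
      unfolding m_def by (rule measure_pmf_eq_on_support)
    then show ?thesis by (simp add: measure_pmf_single)
  qed
  finally show ?thesis by simp
qed

lemma sum_set_pmf_map_pmf:
  assumes "finite (set_pmf Q)"
  shows "(\<Sum>z\<in>set_pmf (map_pmf h Q). pmf (map_pmf h Q) z * g z)
    = (\<Sum>u\<in>set_pmf Q. pmf Q u * g (h u))"
proof -
  have "(\<Sum>z\<in>set_pmf (map_pmf h Q). pmf (map_pmf h Q) z * g z)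
      = measure_pmf.expectation (map_pmf h Q) g"
    using assms by (subst integral_measure_pmf_real[where A = "set_pmf (map_pmf h Q)"])
      (auto simp: mult.commute)
  also have "\<dots> = measure_pmf.expectation Q (\<lambda>u. g (h u))"
    by simp
  also have "\<dots> = (\<Sum>u\<in>set_pmf Q. pmf Q u * g (h u))"
    using assms by (subst integral_measure_pmf_real[where A = "set_pmf Q"]) (auto simp: mult.commute)
  finally show ?thesis .
qed

lemma expectation_log_next_symbol_law:
  assumes fin: "finite (set_pmf Q)"
  shows "(\<Sum>u\<in>set_pmf Q. pmf Q u * log 2 (pmf (next_symbol_law Q j (take j u)) (u ! j)))
       = - cond_entropy (map_pmf (\<lambda>us. (us ! j, take j us)) Q)"
proof -
  let ?M = "map_pmf (\<lambda>us. (us ! j, take j us)) Q"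
  have "(\<Sum>u\<in>set_pmf Q. pmf Q u * log 2 (pmf (next_symbol_law Q j (take j u)) (u ! j)))
      = (\<Sum>z\<in>set_pmf ?M. pmf ?M z * log 2 (pmf (next_symbol_law Q j (snd z)) (fst z)))"
    by (subst sum_set_pmf_map_pmf[OF fin]) simp
  also have "\<dots> = (\<Sum>z\<in>set_pmf ?M. pmf ?M z * log 2 (pmf ?M z / pmf (map_pmf snd ?M) (snd z)))"
  proof (intro sum.cong refl)
    fix z assume "z \<in> set_pmf ?M"
    then obtain u where u: "u \<in> set_pmf Q" "z = (u ! j, take j u)" by auto
    have "pmf ?M z = measure Q {us. take j us = snd z \<and> us ! j = fst z}"
      unfolding pmf_map by (rule arg_cong[where f = "measure Q"]) (auto simp: u)
    moreover have "pmf (map_pmf snd ?M) (snd z) = measure Q {us. take j us = snd z}"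
      unfolding map_pmf_comp pmf_map by (rule arg_cong[where f = "measure Q"]) auto
    moreover have "set_pmf Q \<inter> {us. take j us = snd z} \<noteq> {}" using u by auto
    ultimately show "pmf ?M z * log 2 (pmf (next_symbol_law Q j (snd z)) (fst z)) =
        pmf ?M z * log 2 (pmf ?M z / pmf (map_pmf snd ?M) (snd z))"
      by (simp add: pmf_next_symbol_law[OF fin])
  qed
  finally show ?thesis unfolding cond_entropy_def by simp
qed

section \<open>Successive encoding with frozen uniform positions\<close>

lemma pmf_enc_prefix:
  "length u = k \<Longrightarrow> pmf (enc_prefix cnd V f k) u =
     (\<Prod>j<k. if j \<in> V then (if u ! j = f j then 1 else 0) else pmf (cnd j (take j u)) (u ! j))"
proof (induction k arbitrary: u)
  case 0
  then show ?case by simp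
next
  case (Suc k)
  define w where "w = take k u"
  define x where "x = u ! k"
  have u: "u = w @ [x]" and len_w: "length w = k"
    using Suc.prems unfolding w_def x_def by (simp_all add: take_Suc_conv_app_nth[symmetric])
  have inj: "inj (\<lambda>a. w @ [a])" by (rule injI) simp
  have "pmf (enc_prefix cnd V f (Suc k)) u = pmf (enc_prefix cnd V f k) w *
      pmf (if k \<in> V then return_pmf (w @ [f k]) else map_pmf (\<lambda>a. w @ [a]) (cnd k w)) u"
    unfolding enc_prefix.simps by (rule pmf_bind_eq_single) (auto simp: u pmf_eq_0_set_pmf)
  also have "pmf (if k \<in> V then return_pmf (w @ [f k]) else map_pmf (\<lambda>a. w @ [a]) (cnd k w)) u
      = (if k \<in> V then (if x = f k then 1 else 0) else pmf (cnd k w) x)"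
    by (auto simp: u pmf_map_inj'[OF inj] pmf_return)
  also have "pmf (enc_prefix cnd V f k) w =
      (\<Prod>j<k. if j \<in> V then (if u ! j = f j then 1 else 0) else pmf (cnd j (take j u)) (u ! j))"
    unfolding Suc.IH[OF len_w] by (intro prod.cong refl) (auto simp: u nth_append len_w)
  finally show ?case by (simp add: u len_w nth_append)
qed

lemma pmf_bind_pmf_of_set_ge:
  assumes "finite A" "S \<subseteq> A" "S \<noteq> {}" "\<And>a. a \<in> S \<Longrightarrow> c \<le> pmf (g a) x"
  shows "card S / card A * c \<le> pmf (bind_pmf (pmf_of_set A) g) x"
proof -
  have "card S * c \<le> (\<Sum>a\<in>S. pmf (g a) x)"
    using sum_mono[of S "\<lambda>_. c"] assms(4) by simp
  also have "\<dots> \<le> (\<Sum>a\<in>A. pmf (g a) x)"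
    using assms(1,2) by (intro sum_mono2) auto
  finally have "card S * c / card A \<le> (\<Sum>a\<in>A. pmf (g a) x) / card A"
    by (rule divide_right_mono) simp
  moreover have "A \<noteq> {}" using assms(2,3) by auto
  ultimately show ?thesis
    using assms(1) by (simp add: pmf_bind_pmf_of_set)
qed

text \<open>The encoder reads \<open>cbar\<close> only on \<open>V\<close>: every \<open>cbar\<close> that agrees with \<open>u\<close> on
  \<open>VY \<inter> V\<close>, together with the one fresh \<open>c\<close> that agrees with \<open>u\<close> on \<open>V - VY\<close>, yields \<open>u\<close>
  with probability \<open>R\<close>, and these choices have total probability \<open>p ^ (- card V)\<close>.\<close>
lemma pmf_enc_prefix_uniform_ge:
  fixes p N :: nat and V VY :: "nat set" and u :: "nat list"
  assumes p: "p > 0" and VN: "V \<subseteq> {..<N}" and VYN: "VY \<subseteq> {..<N}"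
    and len: "length u = N" and u: "set u \<subseteq> {..<p}"
  shows "(\<Prod>j\<in>{..<N}-V. pmf (cnd j (take j u)) (u ! j)) / real p ^ card V
    \<le> pmf (bind_pmf (pmf_of_set (PiE VY (\<lambda>_. {..<p}))) (\<lambda>cbar.
            bind_pmf (pmf_of_set (PiE (V - VY) (\<lambda>_. {..<p}))) (\<lambda>c.
              enc_prefix cnd V (\<lambda>j. if j \<in> VY then cbar j else c j) N))) u"
proof -
  define CB where "CB = PiE VY (\<lambda>_. {..<p})"
  define CC where "CC = PiE (V - VY) (\<lambda>_. {..<p})"
  define S where "S = PiE VY (\<lambda>j. if j \<in> V then {u ! j} else {..<p})"
  define c0 where "c0 = restrict (\<lambda>j. u ! j) (V - VY)"
  define R where "R = (\<Prod>j\<in>{..<N}-V. pmf (cnd j (take j u)) (u ! j))"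
  have fin: "finite V" "finite VY" using VN VYN finite_subset by auto
  have u_lt: "u ! j < p" if "j < N" for j using u len that nth_mem by fastforce
  have S_CB: "S \<subseteq> CB"
    unfolding S_def CB_def by (rule PiE_mono) (use VN u_lt in auto)
  have "pmf (enc_prefix cnd V (\<lambda>j. if j \<in> VY then cbar j else c0 j) N) u = R"
    if "cbar \<in> S" for cbar
  proof -
    have "pmf (enc_prefix cnd V (\<lambda>j. if j \<in> VY then cbar j else c0 j) N) u =
        (\<Prod>j<N. if j \<in> V then 1 else pmf (cnd j (take j u)) (u ! j))"
      unfolding pmf_enc_prefix[OF len]
      by (intro prod.cong refl) (use that in \<open>auto simp: S_def c0_def PiE_iff\<close>)
    then show ?thesis by (simp add: R_def prod.If_cases Diff_eq)
  qed
  moreover have "c0 \<in> CC" unfolding c0_def CC_def using VN u_lt by auto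
  ultimately have inner: "card {c0} / card CC * R
      \<le> pmf (bind_pmf (pmf_of_set CC) (\<lambda>c.
             enc_prefix cnd V (\<lambda>j. if j \<in> VY then cbar j else c j) N)) u"
    if "cbar \<in> S" for cbar
    using that fin by (intro pmf_bind_pmf_of_set_ge) (auto simp: CC_def finite_PiE)
  have "card S / card CB * (card {c0} / card CC * R)
      \<le> pmf (bind_pmf (pmf_of_set CB) (\<lambda>cbar. bind_pmf (pmf_of_set CC) (\<lambda>c.
             enc_prefix cnd V (\<lambda>j. if j \<in> VY then cbar j else c j) N))) u"
    by (rule pmf_bind_pmf_of_set_ge)
      (use inner S_CB fin p in \<open>auto simp: CB_def S_def finite_PiE PiE_eq_empty_iff\<close>)
  moreover have "card S / card CB * (card {c0} / card CC * R) = R / real p ^ card V"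
  proof -
    have "card S = p ^ card (VY - V)"
      using fin by (simp add: S_def card_PiE if_distrib cong: if_cong) (simp add: prod.If_cases Diff_eq)
    moreover have "card CB = p ^ card VY" "card CC = p ^ card (V - VY)"
      using fin by (simp_all add: CB_def CC_def card_PiE)
    moreover have "card V = card (VY \<inter> V) + card (V - VY)"
      "card VY = card (VY \<inter> V) + card (VY - V)"
      using fin by (metis Int_commute card_Int_Diff)+
    ultimately show ?thesis
      using p by (simp add: power_add field_simps)
  qed
  ultimately show ?thesis unfolding R_def CB_def CC_def by simp
qed

lemma log_prod:
  assumes "finite A" and pos: "\<And>x. x \<in> A \<Longrightarrow> f x > 0"
  shows "log b (\<Prod>x\<in>A. f x) = (\<Sum>x\<in>A. log b (f x))"
proof -
  have "ln (\<Prod>x\<in>A. f x) = (\<Sum>x\<in>A. ln (f x))"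
    using pos by (intro ln_prod[OF assms(1)]) (metis less_irrefl)
  then show ?thesis by (simp add: log_def sum_divide_distrib)
qed

text \<open>By the chain rule, \<open>Q u\<close> divided by the lower bound for \<open>P u\<close> is \<open>p ^ card V\<close> times
  the conditionals of \<open>Q\<close> at the positions in \<open>V\<close>; the logarithm of this has \<open>Q\<close>-expectation
  \<open>\<Sum>j\<in>V. log p - H(U_j | U_<j)\<close>.\<close>
lemma KL_real_le_entropy_deficit:
  fixes Q P :: "nat list pmf" and p N :: nat and V :: "nat set"
  assumes fin: "finite (set_pmf Q)" and len: "\<And>u. u \<in> set_pmf Q \<Longrightarrow> length u = N"
    and VN: "V \<subseteq> {..<N}" and p: "p > 0"
    and P_ge: "\<And>u. u \<in> set_pmf Q \<Longrightarrow>
        (\<Prod>j\<in>{..<N}-V. pmf (next_symbol_law Q j (take j u)) (u ! j)) / real p ^ card V \<le> pmf P u"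
  shows "\<And>u. u \<in> set_pmf Q \<Longrightarrow> pmf P u > 0"
    and "KL_real Q P
      \<le> (\<Sum>j\<in>V. log 2 p - cond_entropy (map_pmf (\<lambda>us. (us ! j, take j us)) Q))"
proof -
  define c where "c j u = pmf (next_symbol_law Q j (take j u)) (u ! j)" for j u
  define L where "L u = (\<Prod>j\<in>{..<N}-V. c j u) / real p ^ card V" for u
  have finV: "finite V" using VN finite_subset by auto
  have L_pos: "L u > 0" and log_ratio: "log 2 (pmf Q u / L u) = (\<Sum>j\<in>V. log 2 p + log 2 (c j u))"
    if u: "u \<in> set_pmf Q" for u
  proof -
    have Q_eq: "pmf Q u = (\<Prod>j<N. c j u)"
      unfolding c_def by (rule pmf_chain_rule[OF fin u len])
    moreover have "pmf Q u > 0" using u by (simp add: pmf_positive)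
    ultimately have c_pos: "c j u > 0" if "j < N" for j
      using that by (metis c_def less_eq_real_def lessThan_iff pmf_nonneg prod_zero_iff finite_lessThan)
    then show "L u > 0" using p by (auto simp: L_def intro!: prod_pos divide_pos_pos)
    define R where "R = (\<Prod>j\<in>{..<N}-V. c j u)"
    have R_pos: "R > 0" unfolding R_def using c_pos by (auto intro!: prod_pos)
    have Q_split: "pmf Q u = R * (\<Prod>j\<in>V. c j u)"
      unfolding R_def using Q_eq prod.subset_diff[OF VN, of "\<lambda>j. c j u"] by simp
    have L_eq: "L u = R / real p ^ card V" by (simp add: L_def R_def)
    have "pmf Q u / L u = real p ^ card V * (\<Prod>j\<in>V. c j u)"
      unfolding Q_split L_eq using R_pos p by (simp add: field_simps)
    then show "log 2 (pmf Q u / L u) = (\<Sum>j\<in>V. log 2 p + log 2 (c j u))"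
      using c_pos p finV VN
      by (simp add: log_mult_pos log_nat_power log_prod prod_pos sum.distrib subset_eq)
  qed
  show P_pos: "pmf P u > 0" if "u \<in> set_pmf Q" for u
    using L_pos[OF that] P_ge[OF that] by (simp add: L_def c_def)
  have "KL_real Q P \<le> (\<Sum>u\<in>set_pmf Q. pmf Q u * log 2 (pmf Q u / L u))"
    unfolding KL_real_def using L_pos P_ge
    by (intro sum_log_ratio_antimono) (auto simp: pmf_positive L_def c_def)
  also have "\<dots> = (\<Sum>j\<in>V. \<Sum>u\<in>set_pmf Q. pmf Q u * log 2 p + pmf Q u * log 2 (c j u))"
    by (simp add: log_ratio sum_distrib_left distrib_left sum.swap[of _ V] cong: sum.cong)
  also have "\<dots> = (\<Sum>j\<in>V. log 2 p - cond_entropy (map_pmf (\<lambda>us. (us ! j, take j us)) Q))"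
    by (simp add: sum.distrib sum_distrib_right[symmetric] sum_pmf_eq_1[OF fin] c_def
        expectation_log_next_symbol_law[OF fin])
  finally show "KL_real Q P
      \<le> (\<Sum>j\<in>V. log 2 p - cond_entropy (map_pmf (\<lambda>us. (us ! j, take j us)) Q))" .
qed

section \<open>The resolvability scheme\<close>

definition scheme_U_law ::
    "nat \<Rightarrow> nat \<Rightarrow> real \<Rightarrow> nat pmf \<Rightarrow> (nat \<Rightarrow> 'y pmf) \<Rightarrow> nat list pmf" where
  "scheme_U_law p n \<beta> qX W =
     bind_pmf (pmf_of_set (PiE (V_XY p n \<beta> qX W) (\<lambda>_. {..<p}))) (\<lambda>cbar.
       bind_pmf (pmf_of_set (PiE (V_X p n \<beta> qX W - V_XY p n \<beta> qX W) (\<lambda>_. {..<p}))) (\<lambda>c.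
         enc_prefix (cond_next p n qX W) (V_X p n \<beta> qX W)
           (\<lambda>j. if j \<in> V_XY p n \<beta> qX W then cbar j else c j) (2^n)))"

lemma scheme_block_law:
  assumes "i \<in> {1..k}"
  shows "map_pmf (\<lambda>bs. bs ! (i - 1)) (scheme p n \<beta> qX W k)
    = joint_pmf (map_pmf (polar_G_inv p n) (scheme_U_law p n \<beta> qX W)) (mem_channel W)"
proof -
  have "i - 1 < k" using assms by auto
  then show ?thesis
    unfolding scheme_def scheme_U_law_def map_bind_pmf iid_pmf_nth[OF \<open>i - 1 < k\<close>]
      joint_pmf_def bind_map_pmf scheme_block_def
    by (simp add: bind_assoc_pmf map_bind_pmf bind_map_pmf)
qed

lemma q_U_eq_map_polar_G: "q_U p n qX W = map_pmf (polar_G p n) (iid_pmf (2^n) qX)"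
proof -
  have "q_U p n qX W
      = map_pmf (polar_G p n) (map_pmf fst (joint_pmf (iid_pmf (2^n) qX) (mem_channel W)))"
    by (simp add: q_U_def q_UY_def q_joint_eq_joint_pmf map_pmf_comp split_def)
  then show ?thesis unfolding map_fst_joint_pmf .
qed

lemma H_U_eq_cond_entropy:
  "H_U p n qX W j = cond_entropy (map_pmf (\<lambda>us. (us ! j, take j us)) (q_U p n qX W))"
  unfolding H_U_def q_U_def by (simp add: map_pmf_comp split_def)

lemma set_pmf_q_U:
  assumes "p > 0" "u \<in> set_pmf (q_U p n qX W)"
  shows "length u = 2^n" "set u \<subseteq> {..<p}"
  using assms set_polar_G[of p n] by (auto simp: q_U_eq_map_polar_G)

lemma finite_set_pmf_q_U:
  assumes "p > 0"
  shows "finite (set_pmf (q_U p n qX W))"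
proof (rule finite_subset)
  show "set_pmf (q_U p n qX W) \<subseteq> {us. set us \<subseteq> {..<p} \<and> length us = 2^n}"
    using set_pmf_q_U[OF assms] by blast
qed (rule finite_lists_length_eq, simp)

lemma polar_G_inv_q_U:
  assumes p: "p \<ge> 2" and qX: "set_pmf qX \<subseteq> {..<p}"
  shows "map_pmf (polar_G_inv p n) (q_U p n qX W) = iid_pmf (2^n) qX"
    and "inj_on (polar_G_inv p n) (set_pmf (q_U p n qX W))"
proof -
  have inv: "polar_G_inv p n (polar_G p n xs) = xs" if "xs \<in> set_pmf (iid_pmf (2^n) qX)" for xs
    using polar_G_inv_polar_G[OF p] set_pmf_iid_pmf qX that by blast
  then show "map_pmf (polar_G_inv p n) (q_U p n qX W) = iid_pmf (2^n) qX"
    by (simp add: q_U_eq_map_polar_G map_pmf_comp map_pmf_idI)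
  show "inj_on (polar_G_inv p n) (set_pmf (q_U p n qX W))"
    using inv by (auto simp: q_U_eq_map_polar_G intro!: inj_onI)
qed

lemma scheme_U_law_ge:
  assumes "p > 0" "u \<in> set_pmf (q_U p n qX W)"
  shows "(\<Prod>j\<in>{..<2^n} - V_X p n \<beta> qX W.
            pmf (next_symbol_law (q_U p n qX W) j (take j u)) (u ! j))
      / real p ^ card (V_X p n \<beta> qX W)
    \<le> pmf (scheme_U_law p n \<beta> qX W) u"
  unfolding scheme_U_law_def cond_next_eq_next_symbol_law
  by (rule pmf_enc_prefix_uniform_ge)
    (use assms set_pmf_q_U[OF assms] in \<open>auto simp: V_X_def V_XY_def\<close>)

lemma entropy_deficit_V_X_le:
  "(\<Sum>j\<in>V_X p n \<beta> qX W.
      log 2 p - cond_entropy (map_pmf (\<lambda>us. (us ! j, take j us)) (q_U p n qX W)))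
    \<le> real (2^n) * delta (2^n) \<beta>"
proof -
  have "V_X p n \<beta> qX W \<subseteq> {..<2^n}" by (auto simp: V_X_def)
  then have "card (V_X p n \<beta> qX W) \<le> 2^n"
    using card_mono[of "{..<2^n}"] by fastforce
  moreover have "(\<Sum>j\<in>V_X p n \<beta> qX W.
        log 2 p - cond_entropy (map_pmf (\<lambda>us. (us ! j, take j us)) (q_U p n qX W)))
      \<le> card (V_X p n \<beta> qX W) * delta (2^n) \<beta>"
    using sum_mono[of "V_X p n \<beta> qX W" _ "\<lambda>_. delta (2^n) \<beta>"]
    by (force simp: V_X_def H_U_eq_cond_entropy)
  moreover have "delta (2^n) \<beta> \<ge> 0" by (simp add: delta_def)
  ultimately show ?thesis
    by (meson mult_right_mono of_nat_le_iff order_trans)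
qed

theorem lemma1:
  fixes p n k i :: nat and \<beta> :: real and qX :: "nat pmf" and W :: "nat \<Rightarrow> 'y::finite pmf"
  assumes "prime p"
    and "set_pmf qX \<subseteq> {..<p}"
    and "n \<ge> 1"
    and "0 < \<beta>" and "\<beta> < 1/2"
    and "i \<in> {1..k}"
  shows "KL_div (q_joint (2^n) qX W) (map_pmf (\<lambda>bs. bs ! (i - 1)) (scheme p n \<beta> qX W k))
           \<le> ereal (real (2^n) * delta (2^n) \<beta>)"
proof -
  have p: "p \<ge> 2" using assms(1) by (rule prime_ge_2_nat)
  then have p0: "p > 0" by simp
  have VN: "V_X p n \<beta> qX W \<subseteq> {..<2^n}" by (auto simp: V_X_def)
  have fin: "finite (set_pmf (q_U p n qX W))"
    and len: "\<And>u. u \<in> set_pmf (q_U p n qX W) \<Longrightarrow> length u = 2^n"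
    using finite_set_pmf_q_U[OF p0] set_pmf_q_U[OF p0] by auto
  note KL_bound = KL_real_le_entropy_deficit[OF fin len VN p0 scheme_U_law_ge[OF p0]]
  have "KL_div (q_joint (2^n) qX W) (map_pmf (\<lambda>bs. bs ! (i - 1)) (scheme p n \<beta> qX W k))
      = KL_div (joint_pmf (map_pmf (polar_G_inv p n) (q_U p n qX W)) (mem_channel W))
          (joint_pmf (map_pmf (polar_G_inv p n) (scheme_U_law p n \<beta> qX W)) (mem_channel W))"
    unfolding q_joint_eq_joint_pmf polar_G_inv_q_U(1)[OF p assms(2)] scheme_block_law[OF assms(6)] ..
  also have "\<dots> \<le> ereal (KL_real (q_U p n qX W) (scheme_U_law p n \<beta> qX W))"
    using polar_G_inv_q_U(2)[OF p assms(2)] fin KL_bound(1)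
    by (intro KL_div_joint_pmf_map_inj_le) (auto simp: finite_set_pmf_mem_channel)
  also have "\<dots> \<le> ereal (real (2^n) * delta (2^n) \<beta>)"
    using order_trans[OF KL_bound(2) entropy_deficit_V_X_le] by simp
  finally show ?thesis .
qed

end
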